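(* Let $N,M_d\ge 1$, $\varepsilon\ge0$, and $\tilde{\mathbf H}_{rd}=[\tilde{\mathbf h}_1,\dots,\tilde{\mathbf h}_N]\in\mathbb C^{M_d\times N}$. Fix any $\mathbf r\in\mathbb C^{M_d}$ with $\|\mathbf r\|_2=1$, set $\alpha_i=|\tilde{\mathbf h}_i^H\mathbf r|$ and $\chi(N)=\sum_{i=1}^N\alpha_i^2$, and let $\Omega(k^\circ)$ denote the optimal value of $$\max_{\mathbf w\in\mathbb C^N}\ |\mathbf r^H\tilde{\mathbf H}_{rd}\mathbf w|-\varepsilon\|\mathbf w\|_2\quad\text{s.t. } |w_i|\le1,\ i=1,\dots,N$$ (equivalently of $\max\ \sum_{i=1}^N|w_i|\alpha_i-\varepsilon\sqrt{\sum_{i=1}^N|w_i|^2}$ over $|w_i|\le 1$). Then $\Omega(k^\circ)>0$ if and only if $\varepsilon<\sqrt{\chi(N)}$; moreover $\sqrt{\chi(N)}\leq \sqrt{\lambda_{\max}(\tilde {\mathbf H}_{rd}\tilde {\mathbf H}_{rd}^H)}$.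
   Context: $\lambda_{\max}(\cdot)$ denotes the largest eigenvalue of a Hermitian matrix; $\tilde{\mathbf h}_i$ is the $i$-th column of $\tilde{\mathbf H}_{rd}$; $w_i$ the $i$-th entry of $\mathbf w$; $(\cdot)^H$ conjugate transpose; $\|\cdot\|_2$ Euclidean norm. *)

theory Defs
  imports "Jordan_Normal_Form.Schur_Decomposition"
begin

(* Largest eigenvalue of a (Hermitian) complex matrix: the maximum of its real eigenvalues.
   For Hermitian matrices all eigenvalues are real. *)
definition lambda_max :: "complex mat \<Rightarrow> real" where
  "lambda_max A = Max {x::real. eigenvalue A (complex_of_real x)}"

definition vnorm2 :: "complex vec \<Rightarrow> real" where
  "vnorm2 v = sqrt (\<Sum>i<dim_vec v. (cmod (v $ i))\<^sup>2)"

definition feasible :: "nat \<Rightarrow> complex vec set" where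
  "feasible N = {w \<in> carrier_vec N. \<forall>i<N. cmod (w $ i) \<le> 1}"

definition objective :: "complex mat \<Rightarrow> complex vec \<Rightarrow> real \<Rightarrow> complex vec \<Rightarrow> real" where
  "objective H r eps w = cmod (conjugate r \<bullet> (H *\<^sub>v w)) - eps * vnorm2 w"

definition Omega :: "complex mat \<Rightarrow> complex vec \<Rightarrow> real \<Rightarrow> real" where
  "Omega H r eps = (SUP w \<in> feasible (dim_col H). objective H r eps w)"

definition alpha :: "complex mat \<Rightarrow> complex vec \<Rightarrow> nat \<Rightarrow> real" where
  "alpha H r i = cmod (conjugate (col H i) \<bullet> r)"

definition chi :: "complex mat \<Rightarrow> complex vec \<Rightarrow> real" where
  "chi H r = (\<Sum>i<dim_col H. (alpha H r i)\<^sup>2)"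

end

(* With u = H^H r one has alpha_i = |u_i|, so chi = |u|^2, and the objective is
   |u^H w| - eps |w|.  By Cauchy-Schwarz it is at most (|u| - eps) |w|, with equality at the
   feasible point w = u / |u|; hence the optimum is positive exactly when eps < |u|.

   For the eigenvalue bound, chi = r^H (H H^H) r is a Rayleigh quotient of a Gram matrix, whose
   eigenvalues are nonnegative reals, so lambda_max is its spectral radius.  A Rayleigh quotient q
   of a Hermitian A at a unit vector cannot exceed rho(A): repeated Cauchy-Schwarz gives
   q^(2^j) <= |r^H A^(2^j) r|, while for rho(A) < t < q the powers of A / t stay bounded. *)

theory Submission
  imports Defs "HOL-Analysis.L2_Norm" "Jordan_Normal_Form.Spectral_Radius"
begin

lemma conjugate_scalar_prod_eq_sum:
  fixes x y :: "complex vec"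
  assumes "x \<in> carrier_vec n" "y \<in> carrier_vec n"
  shows "conjugate x \<bullet> y = (\<Sum>i<n. cnj (x $ i) * y $ i)"
  using assms unfolding scalar_prod_def lessThan_atLeast0 by simp

lemma vnorm2_nonneg [simp]: "vnorm2 v \<ge> 0"
  unfolding vnorm2_def by (simp add: sum_nonneg)

lemma conjugate_scalar_prod_self:
  fixes x :: "complex vec"
  assumes "x \<in> carrier_vec n"
  shows "conjugate x \<bullet> x = complex_of_real ((vnorm2 x)\<^sup>2)"
proof -
  have "cnj z * z = complex_of_real ((cmod z)\<^sup>2)" for z
    using complex_norm_square[of z] by (simp add: mult.commute)
  then show ?thesis
    using assms by (simp add: conjugate_scalar_prod_eq_sum vnorm2_def sum_nonneg)
qed

lemma norm_conjugate_scalar_prod_le: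
  fixes x y :: "complex vec"
  assumes "x \<in> carrier_vec n" "y \<in> carrier_vec n"
  shows "cmod (conjugate x \<bullet> y) \<le> vnorm2 x * vnorm2 y"
proof -
  have "cmod (conjugate x \<bullet> y) \<le> (\<Sum>i<n. cmod (cnj (x $ i) * y $ i))"
    unfolding conjugate_scalar_prod_eq_sum[OF assms] by (rule norm_sum)
  also have "\<dots> = (\<Sum>i<n. \<bar>cmod (x $ i)\<bar> * \<bar>cmod (y $ i)\<bar>)"
    by (simp add: norm_mult)
  also have "\<dots> \<le> L2_set (\<lambda>i. cmod (x $ i)) {..<n} * L2_set (\<lambda>i. cmod (y $ i)) {..<n}"
    by (rule L2_set_mult_ineq)
  also have "\<dots> = vnorm2 x * vnorm2 y"
    using assms unfolding L2_set_def vnorm2_def by simp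
  finally show ?thesis .
qed

lemma norm_index_le_vnorm2:
  assumes "i < dim_vec v"
  shows "cmod (v $ i) \<le> vnorm2 v"
proof -
  have "(cmod (v $ i))\<^sup>2 \<le> (\<Sum>j<dim_vec v. (cmod (v $ j))\<^sup>2)"
    using assms by (intro member_le_sum) auto
  then show ?thesis
    unfolding vnorm2_def by (rule real_le_rsqrt)
qed

lemma vnorm2_smult: "vnorm2 (c \<cdot>\<^sub>v v) = cmod c * vnorm2 v"
  unfolding vnorm2_def
  by (simp add: norm_mult power_mult_distrib sum_distrib_left[symmetric] real_sqrt_mult)

lemma dim_mat_adjoint [simp]:
  "dim_row (mat_adjoint A) = dim_col A" "dim_col (mat_adjoint A) = dim_row A"
  unfolding mat_adjoint_def by auto

lemma index_mat_adjoint [simp]: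
  "i < dim_col A \<Longrightarrow> j < dim_row A \<Longrightarrow> mat_adjoint A $$ (i, j) = conjugate (A $$ (j, i))"
  unfolding mat_adjoint_def by (auto simp: mat_of_rows_def)

lemma mat_adjoint_carrier [simp]: "A \<in> carrier_mat m n \<Longrightarrow> mat_adjoint A \<in> carrier_mat n m"
  unfolding carrier_mat_def by simp

lemma mat_adjoint_mat_adjoint [simp]:
  fixes A :: "'a :: conjugatable_field mat"
  shows "mat_adjoint (mat_adjoint A) = A"
  by (rule eq_matI) auto

lemma mat_adjoint_mult:
  fixes A B :: "'a :: conjugatable_field mat"
  assumes "A \<in> carrier_mat m n" "B \<in> carrier_mat n p"
  shows "mat_adjoint (A * B) = mat_adjoint B * mat_adjoint A"
  using assms
  by (intro eq_matI) (auto simp: scalar_prod_def sum_conjugate conjugate_dist_mul mult.commute intro!: sum.cong)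

lemma mat_adjoint_one [simp]: "mat_adjoint (1\<^sub>m n :: complex mat) = 1\<^sub>m n"
  by (rule eq_matI) (auto simp: conjugate_complex_def)

lemma mat_adjoint_smult:
  fixes A :: "'a :: conjugatable_field mat"
  shows "mat_adjoint (c \<cdot>\<^sub>m A) = conjugate c \<cdot>\<^sub>m mat_adjoint A"
  by (rule eq_matI) (auto simp: conjugate_dist_mul)

lemma conjugate_scalar_prod_mult_mat_vec:
  fixes A :: "complex mat"
  assumes A: "A \<in> carrier_mat m n" and x: "x \<in> carrier_vec m" and y: "y \<in> carrier_vec n"
  shows "conjugate x \<bullet> (A *\<^sub>v y) = conjugate (mat_adjoint A *\<^sub>v x) \<bullet> y"
proof -
  have "conjugate x \<bullet> (A *\<^sub>v y) = (\<Sum>i<m. \<Sum>j<n. cnj (x $ i) * A $$ (i, j) * y $ j)"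
    using A x y by (simp add: conjugate_scalar_prod_eq_sum[of _ m] scalar_prod_def
        lessThan_atLeast0 sum_distrib_left mult.assoc)
  also have "\<dots> = (\<Sum>j<n. \<Sum>i<m. cnj (x $ i) * A $$ (i, j) * y $ j)"
    by (rule sum.swap)
  also have "\<dots> = conjugate (mat_adjoint A *\<^sub>v x) \<bullet> y"
    using A x y by (simp add: conjugate_scalar_prod_eq_sum[of _ n] scalar_prod_def
        lessThan_atLeast0 sum_distrib_left cnj_sum conjugate_complex_def mult.commute mult.left_commute)
  finally show ?thesis .
qed

definition hermitian_mat :: "complex mat \<Rightarrow> bool" where
  "hermitian_mat A \<longleftrightarrow> mat_adjoint A = A"

lemma hermitian_mat_gram: "hermitian_mat (G * mat_adjoint G)"
  unfolding hermitian_mat_def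
  by (subst mat_adjoint_mult[of G "dim_row G" "dim_col G" _ "dim_row G"]) auto

lemma hermitian_mat_smult_real:
  "hermitian_mat A \<Longrightarrow> hermitian_mat (complex_of_real c \<cdot>\<^sub>m A)"
  unfolding hermitian_mat_def mat_adjoint_smult by (simp add: conjugate_complex_def)

lemma pow_mat_add:
  fixes A :: "'a :: semiring_1 mat"
  assumes "A \<in> carrier_mat n n"
  shows "A ^\<^sub>m (k + l) = A ^\<^sub>m k * A ^\<^sub>m l"
proof -
  let ?R = "ring_mat TYPE('a) n ()"
  interpret semiring ?R by (rule semiring_mat)
  have "A [^]\<^bsub>?R\<^esub> k \<otimes>\<^bsub>?R\<^esub> A [^]\<^bsub>?R\<^esub> l = A [^]\<^bsub>?R\<^esub> (k + l)"
    using assms by (intro nat_pow_mult) (simp add: ring_mat_def)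
  then show ?thesis
    unfolding pow_mat_ring_pow[OF assms, where b = "()"] by (simp add: ring_mat_def)
qed

lemma hermitian_mat_pow:
  assumes A: "A \<in> carrier_mat n n" and herm: "hermitian_mat A"
  shows "hermitian_mat (A ^\<^sub>m k)"
proof (induction k)
  case 0
  then show ?case using A by (simp add: hermitian_mat_def)
next
  case (Suc k)
  have "mat_adjoint (A ^\<^sub>m Suc k) = A * A ^\<^sub>m k"
    using Suc herm A by (simp add: mat_adjoint_mult[of _ n n] hermitian_mat_def)
  also have "\<dots> = A ^\<^sub>m 1 * A ^\<^sub>m k"
    using A by simp
  also have "\<dots> = A ^\<^sub>m Suc k"
    using pow_mat_add[OF A, of 1 k] by simp
  finally show ?case by (simp add: hermitian_mat_def)
qed

lemma hermitian_mat_conjugate_scalar_prod: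
  assumes "A \<in> carrier_mat n n" "hermitian_mat A" "x \<in> carrier_vec n" "y \<in> carrier_vec n"
  shows "conjugate x \<bullet> (A *\<^sub>v y) = conjugate (A *\<^sub>v x) \<bullet> y"
  using conjugate_scalar_prod_mult_mat_vec assms unfolding hermitian_mat_def by metis

lemma norm_rayleigh_square_le:
  assumes A: "A \<in> carrier_mat n n" and herm: "hermitian_mat A"
    and r: "r \<in> carrier_vec n" and r1: "vnorm2 r = 1"
  shows "(cmod (conjugate r \<bullet> (A *\<^sub>v r)))\<^sup>2 \<le> cmod (conjugate r \<bullet> ((A * A) *\<^sub>v r))"
proof -
  define v where "v = A *\<^sub>v r"
  have v: "v \<in> carrier_vec n" using A r unfolding v_def by simp
  have "conjugate r \<bullet> ((A * A) *\<^sub>v r) = conjugate v \<bullet> v"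
    using A r herm v unfolding v_def by (simp add: hermitian_mat_conjugate_scalar_prod)
  then have "cmod (conjugate r \<bullet> ((A * A) *\<^sub>v r)) = (vnorm2 v)\<^sup>2"
    using v by (simp add: conjugate_scalar_prod_self norm_power)
  moreover have "cmod (conjugate r \<bullet> (A *\<^sub>v r)) \<le> vnorm2 v"
    using norm_conjugate_scalar_prod_le[OF r v] r1 unfolding v_def by simp
  ultimately show ?thesis
    by (simp add: power_mono)
qed

lemma norm_rayleigh_pow2_le:
  assumes A: "A \<in> carrier_mat n n" and herm: "hermitian_mat A"
    and r: "r \<in> carrier_vec n" and r1: "vnorm2 r = 1"
  shows "cmod (conjugate r \<bullet> (A *\<^sub>v r)) ^ 2 ^ j \<le> cmod (conjugate r \<bullet> ((A ^\<^sub>m 2 ^ j) *\<^sub>v r))"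
proof (induction j)
  case 0
  then show ?case using A by simp
next
  case (Suc j)
  let ?P = "A ^\<^sub>m 2 ^ j"
  have P: "?P \<in> carrier_mat n n" using A by simp
  have "cmod (conjugate r \<bullet> (A *\<^sub>v r)) ^ 2 ^ Suc j
      = (cmod (conjugate r \<bullet> (A *\<^sub>v r)) ^ 2 ^ j)\<^sup>2"
    by (simp add: power_mult[symmetric] mult.commute)
  also have "\<dots> \<le> (cmod (conjugate r \<bullet> (?P *\<^sub>v r)))\<^sup>2"
    using Suc by (simp add: power_mono)
  also have "\<dots> \<le> cmod (conjugate r \<bullet> ((?P * ?P) *\<^sub>v r))"
    using norm_rayleigh_square_le[OF P hermitian_mat_pow[OF A herm] r r1] .
  also have "?P * ?P = A ^\<^sub>m 2 ^ Suc j"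
    using A by (simp add: pow_mat_add[symmetric] mult_2)
  finally show ?case .
qed

lemma norm_rayleigh_le_norm_bound:
  assumes P: "P \<in> carrier_mat n n" and bound: "norm_bound P b"
    and r: "r \<in> carrier_vec n" and r1: "vnorm2 r = 1"
  shows "cmod (conjugate r \<bullet> (P *\<^sub>v r)) \<le> real n * real n * b"
proof -
  have "conjugate r \<bullet> (P *\<^sub>v r) = (\<Sum>i<n. \<Sum>j<n. cnj (r $ i) * P $$ (i, j) * r $ j)"
    using P r by (simp add: conjugate_scalar_prod_eq_sum[of _ n] scalar_prod_def
        lessThan_atLeast0 sum_distrib_left mult.assoc)
  also have "cmod \<dots> \<le> (\<Sum>i<n. \<Sum>j<n. cmod (cnj (r $ i) * P $$ (i, j) * r $ j))"
    by (rule order_trans[OF norm_sum sum_mono[OF norm_sum]])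
  also have "\<dots> \<le> (\<Sum>i<n. \<Sum>j<n. b)"
  proof (intro sum_mono)
    fix i j assume "i \<in> {..<n}" "j \<in> {..<n}"
    then have "cmod (r $ i) * cmod (P $$ (i, j)) * cmod (r $ j) \<le> 1 * b * 1"
      using norm_index_le_vnorm2[of _ r] r1 r P bound unfolding norm_bound_def
      by (intro mult_mono) (auto intro: order_trans[OF norm_ge_zero])
    then show "cmod (cnj (r $ i) * P $$ (i, j) * r $ j) \<le> b"
      by (simp add: norm_mult)
  qed
  finally show ?thesis by simp
qed

lemma smult_mat_mult_mat_vec:
  assumes "v \<in> carrier_vec (dim_col A)"
  shows "(c \<cdot>\<^sub>m A) *\<^sub>v v = c \<cdot>\<^sub>v (A *\<^sub>v v)"
  using assms by (intro eq_vecI) (auto simp: scalar_prod_def sum_distrib_left mult.assoc)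

lemma spectral_radius_smult_le:
  assumes A: "A \<in> carrier_mat n n" and n: "n > 0" and c: "c \<noteq> 0"
  shows "spectral_radius (c \<cdot>\<^sub>m A) \<le> cmod c * spectral_radius A"
proof -
  obtain e where e: "eigenvalue (c \<cdot>\<^sub>m A) e" and rho: "spectral_radius (c \<cdot>\<^sub>m A) = cmod e"
    using spectral_radius_mem_max(1)[of "c \<cdot>\<^sub>m A" n] A n unfolding spectrum_def by auto
  obtain v where v: "v \<in> carrier_vec n" "v \<noteq> 0\<^sub>v n" and ev: "(c \<cdot>\<^sub>m A) *\<^sub>v v = e \<cdot>\<^sub>v v"
    using e A unfolding eigenvalue_def eigenvector_def by auto
  have "A *\<^sub>v v = (e / c) \<cdot>\<^sub>v v"
    using arg_cong[OF ev, of "\<lambda>w. inverse c \<cdot>\<^sub>v w"] A v c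
    by (simp add: smult_mat_mult_mat_vec smult_smult_assoc field_simps)
  then have "eigenvalue A (e / c)"
    using A v unfolding eigenvalue_def eigenvector_def by auto
  then have "cmod (e / c) \<le> spectral_radius A"
    using spectral_radius_mem_max(2)[OF A n] unfolding spectrum_def by auto
  then show ?thesis
    using rho c by (simp add: norm_divide field_simps)
qed

lemma norm_rayleigh_le_spectral_radius:
  assumes A: "A \<in> carrier_mat n n" and herm: "hermitian_mat A"
    and r: "r \<in> carrier_vec n" and r1: "vnorm2 r = 1"
  shows "cmod (conjugate r \<bullet> (A *\<^sub>v r)) \<le> spectral_radius A"
proof (rule ccontr)
  define q where "q = cmod (conjugate r \<bullet> (A *\<^sub>v r))"
  define \<rho> where "\<rho> = spectral_radius A"
  assume "\<not> q \<le> \<rho>"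
  have n: "n > 0"
    using r r1 unfolding vnorm2_def by (cases n) auto
  have "\<rho> \<in> norm ` spectrum A"
    using spectral_radius_mem_max(1)[OF A n] unfolding \<rho>_def .
  then have "\<rho> \<ge> 0" by auto
  define t where "t = (q + \<rho>) / 2"
  have t: "t > 0" "\<rho> < t" "t < q"
    using \<open>\<not> q \<le> \<rho>\<close> \<open>\<rho> \<ge> 0\<close> unfolding t_def by auto
  define B where "B = complex_of_real (1 / t) \<cdot>\<^sub>m A"
  have B: "B \<in> carrier_mat n n"
    using A unfolding B_def by simp
  have herm_B: "hermitian_mat B"
    unfolding B_def by (rule hermitian_mat_smult_real[OF herm])
  have "spectral_radius B \<le> \<rho> / t"
    using spectral_radius_smult_le[OF A n, of "complex_of_real (1 / t)"] t
    unfolding B_def \<rho>_def by (simp add: norm_divide)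
  moreover have "\<rho> / t < 1"
    using t by simp
  ultimately have "spectral_radius B < 1"
    by linarith
  then obtain c where c: "\<And>k. norm_bound (B ^\<^sub>m k) c"
    using spectral_radius_jnf_norm_bound_less_1_upper_triangular[OF B] by auto
  have q_B: "cmod (conjugate r \<bullet> (B *\<^sub>v r)) = q / t"
    using A r t unfolding B_def q_def by (simp add: smult_mat_mult_mat_vec norm_divide)
  have bound: "(q / t) ^ 2 ^ k \<le> real n * real n * c" for k
    using norm_rayleigh_pow2_le[OF B herm_B r r1, of k]
      norm_rayleigh_le_norm_bound[OF pow_carrier_mat[OF B] c r r1]
    unfolding q_B by (rule order_trans)
  have "q / t > 1"
    using t by simp
  then obtain k where "real n * real n * c < (q / t) ^ k"
    using real_arch_pow by blast
  also have "\<dots> \<le> (q / t) ^ 2 ^ k"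
    using \<open>q / t > 1\<close> by (intro power_increasing) (auto intro: less_imp_le less_exp)
  also have "\<dots> \<le> real n * real n * c"
    by (rule bound)
  finally show False
    by simp
qed

lemma eigenvalue_gram_nonneg_real:
  assumes G: "G \<in> carrier_mat m n" and ev: "eigenvalue (G * mat_adjoint G) e"
  obtains x where "x \<ge> 0" "e = complex_of_real x"
proof -
  obtain v where v: "v \<in> carrier_vec m" "v \<noteq> 0\<^sub>v m" and Av: "(G * mat_adjoint G) *\<^sub>v v = e \<cdot>\<^sub>v v"
    using ev G unfolding eigenvalue_def eigenvector_def by auto
  define u where "u = mat_adjoint G *\<^sub>v v"
  have u: "u \<in> carrier_vec n" using G unfolding u_def carrier_vec_def by simp
  have "e * complex_of_real ((vnorm2 v)\<^sup>2) = conjugate v \<bullet> ((G * mat_adjoint G) *\<^sub>v v)"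
    using v by (simp add: Av conjugate_scalar_prod_self)
  also have "\<dots> = conjugate v \<bullet> (G *\<^sub>v u)"
    unfolding u_def using assoc_mult_mat_vec[OF G mat_adjoint_carrier[OF G] v(1)] by simp
  also have "\<dots> = conjugate u \<bullet> u"
    using conjugate_scalar_prod_mult_mat_vec[OF G v(1) u] by (simp add: u_def)
  also have "\<dots> = complex_of_real ((vnorm2 u)\<^sup>2)"
    using u by (rule conjugate_scalar_prod_self)
  finally have eq: "e * complex_of_real ((vnorm2 v)\<^sup>2) = complex_of_real ((vnorm2 u)\<^sup>2)" .
  have "conjugate v \<bullet> v \<noteq> 0"
    using v conjugate_square_greater_0_vec[of v m] conjugate_vec_sprod_comm[of v m v] by auto
  then have "vnorm2 v \<noteq> 0"
    using v by (simp add: conjugate_scalar_prod_self)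
  then have "e = complex_of_real ((vnorm2 u)\<^sup>2 / (vnorm2 v)\<^sup>2)"
    using eq by (simp add: field_simps)
  then show ?thesis
    using that by (metis divide_nonneg_nonneg zero_le_power2)
qed

lemma lambda_max_gram_eq_spectral_radius:
  assumes G: "G \<in> carrier_mat m n"
  shows "lambda_max (G * mat_adjoint G) = spectral_radius (G * mat_adjoint G)"
proof -
  let ?A = "G * mat_adjoint G"
  have "{x. eigenvalue ?A (complex_of_real x)} = norm ` spectrum ?A"
  proof (intro equalityI subsetI)
    fix x assume "x \<in> {x. eigenvalue ?A (complex_of_real x)}"
    then have ev: "eigenvalue ?A (complex_of_real x)" by simp
    then have "x \<ge> 0"
      using eigenvalue_gram_nonneg_real[OF G] by (metis of_real_eq_iff)
    then show "x \<in> norm ` spectrum ?A"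
      using ev unfolding spectrum_def by (intro image_eqI[of _ _ "complex_of_real x"]) auto
  next
    fix x assume "x \<in> norm ` spectrum ?A"
    then obtain e where "eigenvalue ?A e" "x = cmod e"
      unfolding spectrum_def by auto
    then show "x \<in> {x. eigenvalue ?A (complex_of_real x)}"
      using eigenvalue_gram_nonneg_real[OF G] by fastforce
  qed
  then show ?thesis
    unfolding lambda_max_def spectral_radius_def by simp
qed

lemma vnorm2_le_sqrt_dim:
  assumes "w \<in> feasible N"
  shows "vnorm2 w \<le> sqrt N"
proof -
  have "(\<Sum>i<N. (cmod (w $ i))\<^sup>2) \<le> (\<Sum>i<N. 1)"
    using assms unfolding feasible_def by (intro sum_mono) (simp add: power_le_one)
  then show ?thesis
    using assms unfolding feasible_def vnorm2_def carrier_vec_def by auto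
qed

lemma SUP_feasible_norm_minus_pos_iff:
  fixes u :: "complex vec"
  assumes u: "u \<in> carrier_vec N" and eps: "eps \<ge> 0"
  shows "(SUP w \<in> feasible N. cmod (conjugate u \<bullet> w) - eps * vnorm2 w) > 0 \<longleftrightarrow> eps < vnorm2 u"
proof -
  define f where "f w = cmod (conjugate u \<bullet> w) - eps * vnorm2 w" for w
  have f_le: "f w \<le> (vnorm2 u - eps) * vnorm2 w" if "w \<in> feasible N" for w
    using norm_conjugate_scalar_prod_le[OF u, of w] that
    unfolding f_def feasible_def by (simp add: algebra_simps)
  have "0\<^sub>v N \<in> feasible N"
    unfolding feasible_def by simp
  then have nonempty: "feasible N \<noteq> {}" by blast
  show ?thesis
    unfolding f_def[symmetric]
  proof
    assume pos: "(SUP w \<in> feasible N. f w) > 0"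
    show "eps < vnorm2 u"
    proof (rule ccontr)
      assume "\<not> eps < vnorm2 u"
      then have "f w \<le> 0" if "w \<in> feasible N" for w
        using f_le[OF that] mult_nonpos_nonneg[of "vnorm2 u - eps" "vnorm2 w"] vnorm2_nonneg[of w]
        by linarith
      then have "(SUP w \<in> feasible N. f w) \<le> 0"
        using nonempty by (intro cSUP_least)
      with pos show False by simp
    qed
  next
    assume less: "eps < vnorm2 u"
    then have u_pos: "vnorm2 u > 0"
      using eps by simp
    define w where "w = complex_of_real (1 / vnorm2 u) \<cdot>\<^sub>v u"
    have w: "w \<in> feasible N"
      using u u_pos norm_index_le_vnorm2[of _ u]
      unfolding w_def feasible_def by (auto simp: norm_divide divide_le_eq)
    have "vnorm2 w = 1"
      using u_pos unfolding w_def vnorm2_smult by (simp add: norm_divide)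
    moreover have "conjugate u \<bullet> w = complex_of_real (vnorm2 u)"
      using u u_pos unfolding w_def
      by (simp add: conjugate_scalar_prod_self power2_eq_square)
    ultimately have "f w = vnorm2 u - eps"
      unfolding f_def by simp
    moreover have "bdd_above (f ` feasible N)"
    proof (rule bdd_aboveI2)
      fix w assume w: "w \<in> feasible N"
      have "f w \<le> (vnorm2 u - eps) * vnorm2 w"
        using w by (rule f_le)
      also have "\<dots> \<le> vnorm2 u * sqrt N"
        using eps vnorm2_le_sqrt_dim[OF w] by (intro mult_mono) auto
      finally show "f w \<le> vnorm2 u * sqrt N" .
    qed
    ultimately have "vnorm2 u - eps \<le> (SUP w \<in> feasible N. f w)"
      using w by (metis cSUP_upper)
    then show "(SUP w \<in> feasible N. f w) > 0"
      using less by simp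
  qed
qed

lemma row_mat_adjoint:
  "i < dim_col A \<Longrightarrow> row (mat_adjoint A) i = conjugate (col A i)"
  by (rule eq_vecI) auto

lemma objective_eq_adjoint:
  assumes "H \<in> carrier_mat m n" "r \<in> carrier_vec m" "w \<in> carrier_vec n"
  shows "objective H r eps w = cmod (conjugate (mat_adjoint H *\<^sub>v r) \<bullet> w) - eps * vnorm2 w"
  unfolding objective_def conjugate_scalar_prod_mult_mat_vec[OF assms] ..

lemma chi_eq_vnorm2_adjoint:
  "chi H r = (vnorm2 (mat_adjoint H *\<^sub>v r))\<^sup>2"
  unfolding chi_def alpha_def vnorm2_def by (simp add: row_mat_adjoint sum_nonneg)

lemma chi_le_lambda_max:
  assumes H: "H \<in> carrier_mat m n" and r: "r \<in> carrier_vec m" and r1: "vnorm2 r = 1"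
  shows "chi H r \<le> lambda_max (H * mat_adjoint H)"
proof -
  define u where "u = mat_adjoint H *\<^sub>v r"
  have u: "u \<in> carrier_vec n"
    using H unfolding u_def carrier_vec_def by simp
  have "conjugate r \<bullet> ((H * mat_adjoint H) *\<^sub>v r) = conjugate u \<bullet> u"
    using assoc_mult_mat_vec[OF H mat_adjoint_carrier[OF H] r]
      conjugate_scalar_prod_mult_mat_vec[OF H r u] by (simp add: u_def)
  also have "\<dots> = complex_of_real (chi H r)"
    using u unfolding chi_eq_vnorm2_adjoint u_def[symmetric] by (rule conjugate_scalar_prod_self)
  finally have rayleigh: "conjugate r \<bullet> ((H * mat_adjoint H) *\<^sub>v r) = complex_of_real (chi H r)" .
  have "chi H r = cmod (conjugate r \<bullet> ((H * mat_adjoint H) *\<^sub>v r))"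
    unfolding rayleigh norm_of_real by (simp add: chi_eq_vnorm2_adjoint)
  also have "\<dots> \<le> spectral_radius (H * mat_adjoint H)"
    using H r r1 hermitian_mat_gram by (intro norm_rayleigh_le_spectral_radius[of _ m]) auto
  also have "\<dots> = lambda_max (H * mat_adjoint H)"
    using lambda_max_gram_eq_spectral_radius[OF H] ..
  finally show ?thesis .
qed

theorem proposition1:
  fixes H :: "complex mat" and r :: "complex vec" and N Md :: nat and eps :: real
  assumes "N \<ge> 1" and "Md \<ge> 1" and "eps \<ge> 0"
    and "H \<in> carrier_mat Md N"
    and "r \<in> carrier_vec Md" and "vnorm2 r = 1"
  shows "(Omega H r eps > 0 \<longleftrightarrow> eps < sqrt (chi H r))
         \<and> sqrt (chi H r) \<le> sqrt (lambda_max (H * mat_adjoint H))"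
proof
  let ?u = "mat_adjoint H *\<^sub>v r"
  have u: "?u \<in> carrier_vec N"
    using assms(4) unfolding carrier_vec_def by simp
  have "Omega H r eps = (SUP w \<in> feasible N. cmod (conjugate ?u \<bullet> w) - eps * vnorm2 w)"
    unfolding Omega_def using assms(4,5)
    by (intro SUP_cong) (auto simp: feasible_def objective_eq_adjoint)
  moreover have "sqrt (chi H r) = vnorm2 ?u"
    unfolding chi_eq_vnorm2_adjoint by simp
  ultimately show "Omega H r eps > 0 \<longleftrightarrow> eps < sqrt (chi H r)"
    using SUP_feasible_norm_minus_pos_iff[OF u assms(3)] by simp
  show "sqrt (chi H r) \<le> sqrt (lambda_max (H * mat_adjoint H))"
    using chi_le_lambda_max[OF assms(4-6)] by simp
qed

end
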